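(* Let $\{\tau_b\}_{b\in\mathcal{B}}$ with weights $(p_b)_{b\in\mathcal{B}}$ be an affine iterated function system on $\mathbb{R}^d$ with no overlap, and let $\mu$ be its invariant measure. If $\mu$ admits a frame measure, then all the probabilities $p_b$, $b\in\mathcal{B}$, are equal.
   Context: Affine IFS: $R$ a real $d\times d$ expansive matrix (all eigenvalues of modulus $>1$), $\mathcal{B}=\{b_1,\dots,b_N\}\subset\mathbb{R}^d$, probability weights $p_{b}>0$ with $\sum_b p_{b}=1$, maps $\tau_{b}(x)=R^{-1}(x+b)$. The attractor $X$ is the unique nonempty compact set with $X=\bigcup_b\tau_{b}(X)$; the invariant measure $\mu$ is the unique Borel probability measure with $\mu(E)=\sum_b p_{b}\mu(\tau_{b}^{-1}(E))$ for all Borel $E$. No overlap: $\mu(\tau_{b}(X)\cap\tau_{b'}(X))=0$ for all $b\ne b'$. A Borel measure $\nu$ is a frame measure for $\mu$ if there are $A,B>0$ with $A\|f\|_{L^2(\mu)}^2\le \|\widehat{f\,d\mu}\|_{L^2(\nu)}^2\le B\|f\|_{L^2(\mu)}^2$ for all $f\in L^2(\mu)$, where $\widehat{f\,d\mu}(t)=\int f(x)e^{-2\pi i t\cdot x}\,d\mu(x)$. *)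

theory Defs
  imports "HOL-Probability.Probability"
begin

definition complexify :: "real^'d^'d \<Rightarrow> complex^'d^'d" where
  "complexify R = (\<chi> i j. complex_of_real (R $ i $ j))"

definition expansive :: "real^'d^'d \<Rightarrow> bool" where
  "expansive R \<longleftrightarrow>
     (\<forall>c::complex. (\<exists>v::complex^'d. v \<noteq> 0 \<and> complexify R *v v = c *s v) \<longrightarrow> 1 < norm c)"

definition ifs_map :: "real^'d^'d \<Rightarrow> real^'d \<Rightarrow> real^'d \<Rightarrow> real^'d" where
  "ifs_map R b x = matrix_inv R *v (x + b)"

definition fourier_fmu :: "(real^'d) measure \<Rightarrow> (real^'d \<Rightarrow> complex) \<Rightarrow> real^'d \<Rightarrow> complex" where
  "fourier_fmu \<mu> f t = (\<integral>x. f x * cis (- 2 * pi * (t \<bullet> x)) \<partial>\<mu>)"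

definition L2 :: "(real^'d) measure \<Rightarrow> (real^'d \<Rightarrow> complex) set" where
  "L2 \<mu> = {f. f \<in> borel_measurable \<mu> \<and> integrable \<mu> (\<lambda>x. (norm (f x))\<^sup>2)}"

definition L2_norm_sq :: "(real^'d) measure \<Rightarrow> (real^'d \<Rightarrow> complex) \<Rightarrow> real" where
  "L2_norm_sq \<mu> f = (\<integral>x. (norm (f x))\<^sup>2 \<partial>\<mu>)"

definition frame_measure :: "(real^'d) measure \<Rightarrow> (real^'d) measure \<Rightarrow> bool" where
  "frame_measure \<mu> \<nu> \<longleftrightarrow> sets \<nu> = sets borel \<and>
     (\<exists>A B. 0 < A \<and> 0 < B \<and>
       (\<forall>f \<in> L2 \<mu>.
          ennreal (A * L2_norm_sq \<mu> f) \<le> (\<integral>\<^sup>+ t. ennreal ((norm (fourier_fmu \<mu> f t))\<^sup>2) \<partial>\<nu>) \<and>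
          (\<integral>\<^sup>+ t. ennreal ((norm (fourier_fmu \<mu> f t))\<^sup>2) \<partial>\<nu>) \<le> ennreal (B * L2_norm_sq \<mu> f)))"

end

theory Submission
  imports Defs Jordan_Normal_Form.Spectral_Radius
begin

(* Idea: for a word w = b1...bn of digits, let tau_w = tau_b1 o ... o tau_bn and
   p_w = p_b1 * ... * p_bn.  Since there is no overlap and mu is carried by X,
   mu restricted to the cylinder tau_w(X) equals p_w times the image of mu under tau_w.
   Hence the indicator f of tau_w(X) has ||f||^2 = p_w, and |F(f d mu)(t)| = p_w |Phi_n(t)|,
   where Phi_n is the Fourier transform of mu pushed forward by R^-n (the translation
   part of tau_w only contributes a unimodular factor).  The frame inequality then gives
   A <= p_w I_n <= B with I_n = int |Phi_n|^2 d nu depending only on n = |w|.  Taking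
   w = b^n and w = b'^n shows that (p_b / p_b')^n <= B / A for every n, so p_b <= p_b'. *)

text \<open>The Jordan normal form library's vector indexing clashes with Cartesian components.\<close>
no_notation vec_index (infixl "$" 100)

definition cart_eigenvalue :: "complex^'n^'n \<Rightarrow> complex \<Rightarrow> bool" where
  "cart_eigenvalue C c \<longleftrightarrow> (\<exists>v. v \<noteq> 0 \<and> C *v v = c *s v)"

definition cvec :: "real^'d \<Rightarrow> complex^'d" where
  "cvec x = (\<chi> i. complex_of_real (x $ i))"

lemma complexify_mult_cvec: "complexify A *v cvec x = cvec (A *v x)"
  by (simp add: complexify_def cvec_def Finite_Cartesian_Product.vec_eq_iff matrix_vector_mult_def)

lemma complexify_mult: "complexify (A ** B) = complexify A ** complexify B"
  by (simp add: complexify_def Finite_Cartesian_Product.vec_eq_iff matrix_matrix_mult_def)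

lemma complexify_id: "complexify (Finite_Cartesian_Product.mat 1) = Finite_Cartesian_Product.mat 1"
  by (simp add: complexify_def Finite_Cartesian_Product.vec_eq_iff Finite_Cartesian_Product.mat_def if_distrib)

lemma cvec_eq_0_iff: "cvec x = 0 \<longleftrightarrow> x = 0"
  by (simp add: cvec_def Finite_Cartesian_Product.vec_eq_iff)

lemma norm_cvec: "norm (cvec x) = norm x"
  by (simp add: cvec_def norm_vec_def)

lemma cvec_iterate: "cvec (((*v) A ^^ k) x) = ((*v) (complexify A) ^^ k) (cvec x)"
  by (induction k) (simp_all add: complexify_mult_cvec[symmetric])

text \<open>An expansive matrix has trivial kernel (0 is not an eigenvalue), hence is invertible.\<close>
lemma expansive_inverse:
  fixes R :: "real^'d^'d"
  assumes "expansive R"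
  shows "R ** matrix_inv R = Finite_Cartesian_Product.mat 1"
    and "matrix_inv R ** R = Finite_Cartesian_Product.mat 1"
proof -
  have "x = 0" if Rx: "R *v x = 0" for x
  proof (rule ccontr)
    assume "x \<noteq> 0"
    then have "cvec x \<noteq> 0" by (simp add: cvec_eq_0_iff)
    moreover have "complexify R *v cvec x = 0 *s cvec x"
      using Rx complexify_mult_cvec[of R x] by (simp add: cvec_def Finite_Cartesian_Product.vec_eq_iff)
    ultimately show False using assms unfolding expansive_def by force
  qed
  then obtain L where "L ** R = Finite_Cartesian_Product.mat 1"
    using matrix_left_invertible_ker by blast
  then have "\<exists>A'. R ** A' = Finite_Cartesian_Product.mat 1 \<and> A' ** R = Finite_Cartesian_Product.mat 1"
    using matrix_left_right_inverse by blast
  then have "R ** matrix_inv R = Finite_Cartesian_Product.mat 1 \<and>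
             matrix_inv R ** R = Finite_Cartesian_Product.mat 1"
    unfolding matrix_inv_def by (rule someI_ex)
  then show "R ** matrix_inv R = Finite_Cartesian_Product.mat 1"
    and "matrix_inv R ** R = Finite_Cartesian_Product.mat 1" by auto
qed

text \<open>The eigenvalues of the inverse of an expansive matrix are the reciprocals of those of
  the matrix, so they all lie in the open unit disc.\<close>
lemma expansive_inverse_eigenvalues:
  fixes R :: "real^'d^'d"
  assumes "expansive R" and "cart_eigenvalue (complexify (matrix_inv R)) c"
  shows "norm c < 1"
proof -
  obtain w where w: "w \<noteq> 0" "complexify (matrix_inv R) *v w = c *s w"
    using assms(2) unfolding cart_eigenvalue_def by blast
  have "complexify R *v (complexify (matrix_inv R) *v w) = w"
    using expansive_inverse[OF assms(1)]
    by (simp add: matrix_vector_mul_assoc complexify_mult[symmetric] complexify_id)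
  then have Rw: "c *s (complexify R *v w) = w"
    using w(2) by (simp add: vector_scalar_commute)
  then have "c \<noteq> 0" using w(1) by auto
  then have "complexify R *v w = inverse c *s w"
    using Rw by (metis vector_smult_assoc left_inverse vector_smult_lid)
  then have "1 < norm (inverse c)"
    using assms(1) w(1) unfolding expansive_def by blast
  then show ?thesis
    by (simp add: norm_inverse one_less_inverse_iff)
qed

text \<open>To use the spectral theory of the Jordan normal form library, a Cartesian complex matrix is
  translated into a list-based matrix along an enumeration \<open>h\<close> of the index type.\<close>
definition jnf_mat :: "(nat \<Rightarrow> 'n::finite) \<Rightarrow> complex^'n^'n \<Rightarrow> complex Matrix.mat" where
  "jnf_mat h C = Matrix.mat CARD('n) CARD('n) (\<lambda>(i, j). C $ h i $ h j)"

definition jnf_vec :: "(nat \<Rightarrow> 'n::finite) \<Rightarrow> complex^'n \<Rightarrow> complex Matrix.vec" where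
  "jnf_vec h x = Matrix.vec CARD('n) (\<lambda>i. x $ h i)"

lemma jnf_mat_carrier [simp]: "jnf_mat (h :: nat \<Rightarrow> 'n::finite) C \<in> carrier_mat CARD('n) CARD('n)"
  by (simp add: jnf_mat_def)

lemma jnf_vec_carrier [simp]: "jnf_vec (h :: nat \<Rightarrow> 'n::finite) x \<in> carrier_vec CARD('n)"
  by (simp add: jnf_vec_def)

lemma jnf_vec_smult: "jnf_vec h (c *s x) = c \<cdot>\<^sub>v jnf_vec h x"
  by (auto simp: jnf_vec_def)

context
  fixes h :: "nat \<Rightarrow> 'n::finite"
  assumes h: "bij_betw h {0..<CARD('n)} UNIV"
begin

lemma jnf_vec_mult: "jnf_vec h (C *v y) = jnf_mat h C *\<^sub>v jnf_vec h y"
proof (rule eq_vecI)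
  fix i assume "i < dim_vec (jnf_mat h C *\<^sub>v jnf_vec h y)"
  then have i: "i < CARD('n)" by (simp add: jnf_mat_def)
  have "(\<Sum>j\<in>UNIV. C $ h i $ j * y $ j) = (\<Sum>l\<in>{0..<CARD('n)}. C $ h i $ h l * y $ h l)"
    using sum.reindex_bij_betw[OF h, of "\<lambda>j. C $ h i $ j * y $ j"] by simp
  then show "vec_index (jnf_vec h (C *v y)) i = vec_index (jnf_mat h C *\<^sub>v jnf_vec h y) i"
    using i by (simp add: jnf_vec_def jnf_mat_def matrix_vector_mult_def scalar_prod_def)
qed (simp add: jnf_vec_def jnf_mat_def)

lemma jnf_vec_inj: "jnf_vec h x = jnf_vec h y \<Longrightarrow> x = y"
proof -
  assume eq: "jnf_vec h x = jnf_vec h y"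
  have "x $ i = y $ i" for i
  proof -
    obtain l where "l < CARD('n)" "h l = i"
      using h unfolding bij_betw_def by (metis UNIV_I atLeastLessThan_iff imageE)
    then show ?thesis using arg_cong[OF eq, of "\<lambda>v. vec_index v l"] by (simp add: jnf_vec_def)
  qed
  then show "x = y" by (simp add: Finite_Cartesian_Product.vec_eq_iff)
qed

lemma jnf_vec_surj:
  assumes "v \<in> carrier_vec CARD('n)"
  obtains x where "jnf_vec h x = v"
proof
  define g where "g = inv_into {0..<CARD('n)} h"
  show "jnf_vec h (\<chi> i. vec_index v (g i)) = v"
  proof (rule eq_vecI)
    fix l assume "l < dim_vec v"
    then have l: "l < CARD('n)" using assms by simp
    then have "g (h l) = l" unfolding g_def using h by (simp add: bij_betw_def inv_into_f_f)
    then show "vec_index (jnf_vec h (\<chi> i. vec_index v (g i))) l = vec_index v l"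
      using l by (simp add: jnf_vec_def)
  qed (use assms in \<open>simp add: jnf_vec_def\<close>)
qed

lemma jnf_vec_eq_0_iff: "jnf_vec h x = 0\<^sub>v CARD('n) \<longleftrightarrow> x = 0"
proof -
  have "jnf_vec h 0 = 0\<^sub>v CARD('n)" by (simp add: jnf_vec_def Matrix.zero_vec_def)
  then show ?thesis using jnf_vec_inj by metis
qed

lemma jnf_eigenvalue_iff: "eigenvalue (jnf_mat h C) c \<longleftrightarrow> cart_eigenvalue C c"
proof
  assume "eigenvalue (jnf_mat h C) c"
  then obtain v where v: "v \<in> carrier_vec CARD('n)" "v \<noteq> 0\<^sub>v CARD('n)" "jnf_mat h C *\<^sub>v v = c \<cdot>\<^sub>v v"
    unfolding eigenvalue_def eigenvector_def by (auto simp: jnf_mat_def)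
  obtain w where w: "jnf_vec h w = v" using jnf_vec_surj[OF v(1)] by blast
  have "jnf_vec h (C *v w) = jnf_vec h (c *s w)"
    using v(3) w by (simp add: jnf_vec_mult jnf_vec_smult)
  then have "C *v w = c *s w" by (rule jnf_vec_inj)
  moreover have "w \<noteq> 0" using v(2) w jnf_vec_eq_0_iff by blast
  ultimately show "cart_eigenvalue C c" unfolding cart_eigenvalue_def by blast
next
  assume "cart_eigenvalue C c"
  then obtain w where w: "w \<noteq> 0" "C *v w = c *s w" unfolding cart_eigenvalue_def by blast
  have "jnf_mat h C *\<^sub>v jnf_vec h w = c \<cdot>\<^sub>v jnf_vec h w"
    using w(2) by (simp add: jnf_vec_mult[symmetric] jnf_vec_smult)
  then show "eigenvalue (jnf_mat h C) c"
    using w(1) jnf_vec_eq_0_iff unfolding eigenvalue_def eigenvector_def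
    by (intro exI[of _ "jnf_vec h w"]) (simp add: jnf_mat_def)
qed

lemma jnf_vec_iterate: "jnf_vec h (((*v) C ^^ k) y) = jnf_mat h C ^\<^sub>m k *\<^sub>v jnf_vec h y"
proof (induction k arbitrary: y)
  case 0
  then show ?case by (simp add: jnf_mat_def)
next
  case (Suc k)
  have "jnf_vec h (((*v) C ^^ Suc k) y) = jnf_vec h (((*v) C ^^ k) (C *v y))"
    by (simp add: funpow_Suc_right del: funpow.simps)
  also have "\<dots> = jnf_mat h C ^\<^sub>m k *\<^sub>v (jnf_mat h C *\<^sub>v jnf_vec h y)"
    by (simp add: Suc jnf_vec_mult)
  also have "\<dots> = jnf_mat h C ^\<^sub>m Suc k *\<^sub>v jnf_vec h y"
    by (simp add: assoc_mult_mat_vec[of _ "CARD('n)" "CARD('n)" _ "CARD('n)"])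
  finally show ?case .
qed

end

text \<open>The spectral radius of the translated matrix is attained at an eigenvalue, so if all
  eigenvalues lie in the open unit disc, the spectral radius is a bound \<open>< 1\<close> for them.\<close>
lemma spectral_radius_bounds:
  fixes C :: "complex^'n^'n" and h :: "nat \<Rightarrow> 'n::finite"
  assumes h: "bij_betw h {0..<CARD('n)} UNIV"
    and disc: "\<And>c. cart_eigenvalue C c \<Longrightarrow> norm c < 1"
  shows "spectral_radius (jnf_mat h C) < 1"
    and "cart_eigenvalue C c \<Longrightarrow> norm c \<le> spectral_radius (jnf_mat h C)"
proof -
  have "spectral_radius (jnf_mat h C) \<in> norm ` spectrum (jnf_mat h C)"
    by (rule spectral_radius_mem_max(1)[OF jnf_mat_carrier]) simp
  then show "spectral_radius (jnf_mat h C) < 1"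
    using disc jnf_eigenvalue_iff[OF h] by (auto simp: spectrum_def)
  assume "cart_eigenvalue C c"
  then have "norm c \<in> norm ` spectrum (jnf_mat h C)"
    using jnf_eigenvalue_iff[OF h] by (auto simp: spectrum_def)
  then show "norm c \<le> spectral_radius (jnf_mat h C)"
    by (rule spectral_radius_mem_max(2)[OF jnf_mat_carrier zero_less_card_finite])
qed

lemma norm_le_sum_norm_cart: "norm (x :: 'a::real_normed_vector^'n) \<le> (\<Sum>i\<in>UNIV. norm (x $ i))"
  by (simp add: norm_vec_def L2_set_le_sum)

text \<open>A complex matrix whose eigenvalues lie in the open unit disc has uniformly bounded
  powers; this is where the Jordan normal form enters.\<close>
lemma bounded_powers:
  fixes C :: "complex^'n^'n"
  assumes disc: "\<And>c. cart_eigenvalue C c \<Longrightarrow> norm c < 1"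
  obtains K where "\<And>k w. norm (((*v) C ^^ k) w) \<le> K * norm w"
proof -
  obtain h :: "nat \<Rightarrow> 'n" where h: "bij_betw h {0..<CARD('n)} UNIV"
    using ex_bij_betw_nat_finite[of "UNIV :: 'n set"] by auto
  let ?n = "CARD('n)" and ?A = "jnf_mat h C"
  obtain c0 where c0: "\<And>k. norm_bound (?A ^\<^sub>m k) c0"
    using spectral_radius_jnf_norm_bound_less_1_upper_triangular[OF jnf_mat_carrier
        spectral_radius_bounds(1)[of h C, OF h disc]] by blast
  have "norm (((*v) C ^^ k) w) \<le> (real ?n * real ?n * \<bar>c0\<bar>) * norm w" for k w
  proof -
    have entry: "norm ((?A ^\<^sub>m k) $$ (l, j)) \<le> \<bar>c0\<bar>" if "l < ?n" "j < ?n" for l j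
    proof -
      have "norm ((?A ^\<^sub>m k) $$ (l, j)) \<le> c0"
        using c0[of k] that unfolding norm_bound_def by (simp add: jnf_mat_def)
      then show ?thesis by linarith
    qed
    have comp: "norm (vec_index (?A ^\<^sub>m k *\<^sub>v jnf_vec h w) l) \<le> real ?n * (\<bar>c0\<bar> * norm w)"
      if l: "l < ?n" for l
    proof -
      have "norm (vec_index (?A ^\<^sub>m k *\<^sub>v jnf_vec h w) l) =
            norm (\<Sum>j\<in>{0..<?n}. (?A ^\<^sub>m k) $$ (l, j) * w $ h j)"
        using l carrier_matD[OF pow_carrier_mat[OF jnf_mat_carrier[of h C], of k]]
        by (simp add: scalar_prod_def jnf_vec_def)
      also have "\<dots> \<le> (\<Sum>j\<in>{0..<?n}. norm ((?A ^\<^sub>m k) $$ (l, j)) * norm (w $ h j))"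
        by (rule order_trans[OF norm_sum]) (simp add: norm_mult)
      also have "\<dots> \<le> (\<Sum>j\<in>{0..<?n}. \<bar>c0\<bar> * norm w)"
        using entry l Finite_Cartesian_Product.norm_nth_le by (intro sum_mono mult_mono) auto
      finally show ?thesis by simp
    qed
    have "norm (((*v) C ^^ k) w) \<le> (\<Sum>i\<in>UNIV. norm ((((*v) C ^^ k) w) $ i))"
      by (rule norm_le_sum_norm_cart)
    also have "\<dots> = (\<Sum>l\<in>{0..<?n}. norm (vec_index (jnf_vec h (((*v) C ^^ k) w)) l))"
      using sum.reindex_bij_betw[OF h, of "\<lambda>i. norm ((((*v) C ^^ k) w) $ i)"]
      by (simp add: jnf_vec_def)
    also have "\<dots> \<le> (\<Sum>l\<in>{0..<?n}. real ?n * (\<bar>c0\<bar> * norm w))"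
      using comp by (intro sum_mono) (simp add: jnf_vec_iterate[OF h])
    finally show ?thesis by simp
  qed
  then show thesis by (rule that)
qed

lemma norm_of_real_smult: "norm (complex_of_real a *s v) = \<bar>a\<bar> * norm (v :: complex^'n)"
proof -
  have "complex_of_real a *s v = a *\<^sub>R v"
    by (vector scaleR_conv_of_real)
  then show ?thesis by simp
qed

lemma divide_matrix_mult:
  fixes C :: "complex^'n^'n"
  shows "(\<chi> i j. C $ i $ j / \<sigma>) *v w = inverse \<sigma> *s (C *v w)"
  by (simp add: Finite_Cartesian_Product.vec_eq_iff matrix_vector_mult_def
      sum_distrib_left divide_inverse ac_simps)

lemma divide_matrix_eigenvalue:
  fixes C :: "complex^'n^'n"
  assumes "\<sigma> \<noteq> 0" and "cart_eigenvalue (\<chi> i j. C $ i $ j / \<sigma>) e"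
  shows "cart_eigenvalue C (\<sigma> * e)"
proof -
  obtain v where v: "v \<noteq> 0" "inverse \<sigma> *s (C *v v) = e *s v"
    using assms(2) unfolding cart_eigenvalue_def divide_matrix_mult by blast
  have "C *v v = (\<sigma> * inverse \<sigma>) *s (C *v v)" using assms(1) by simp
  also have "\<dots> = \<sigma> *s (inverse \<sigma> *s (C *v v))" by (rule vector_smult_assoc[symmetric])
  also have "\<dots> = (\<sigma> * e) *s v" unfolding v(2) by (rule vector_smult_assoc)
  finally show ?thesis using v(1) unfolding cart_eigenvalue_def by blast
qed

lemma divide_matrix_iterate:
  fixes C :: "complex^'n^'n"
  assumes "\<sigma> \<noteq> 0"
  shows "((*v) C ^^ k) w = \<sigma> ^ k *s ((*v) (\<chi> i j. C $ i $ j / \<sigma>) ^^ k) w"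
proof (induction k)
  case (Suc k)
  have "((*v) C ^^ Suc k) w = C *v (\<sigma> ^ k *s ((*v) (\<chi> i j. C $ i $ j / \<sigma>) ^^ k) w)"
    by (simp add: Suc)
  also have "\<dots> = \<sigma> ^ Suc k *s ((\<chi> i j. C $ i $ j / \<sigma>) *v ((*v) (\<chi> i j. C $ i $ j / \<sigma>) ^^ k) w)"
    using assms by (simp add: divide_matrix_mult vector_scalar_commute vector_smult_assoc)
  finally show ?case by simp
qed simp
text \<open>Rescaling by a number between the spectral radius and 1 turns bounded powers into
  geometrically decaying ones.\<close>
lemma decaying_powers:
  fixes C :: "complex^'n^'n"
  assumes disc: "\<And>c. cart_eigenvalue C c \<Longrightarrow> norm c < 1"
  obtains K s where "0 < s" "s < 1" "\<And>k w. norm (((*v) C ^^ k) w) \<le> K * s ^ k * norm w"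
proof -
  obtain h :: "nat \<Rightarrow> 'n" where h: "bij_betw h {0..<CARD('n)} UNIV"
    using ex_bij_betw_nat_finite[of "UNIV :: 'n set"] by auto
  define r where "r = spectral_radius (jnf_mat h C)"
  define s where "s = (1 + max 0 r) / 2"
  have "r < 1" unfolding r_def by (rule spectral_radius_bounds(1)[of h C, OF h disc])
  then have s: "0 < s" "s < 1" "r < s" by (auto simp: s_def)
  define \<sigma> where "\<sigma> = complex_of_real s"
  have \<sigma>: "\<sigma> \<noteq> 0" using s by (simp add: \<sigma>_def)
  have disc': "norm e < 1" if "cart_eigenvalue (\<chi> i j. C $ i $ j / \<sigma>) e" for e
  proof -
    have "norm (\<sigma> * e) \<le> r"
      unfolding r_def
      by (rule spectral_radius_bounds(2)[of h C, OF h disc divide_matrix_eigenvalue[OF \<sigma> that]])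
    then have "s * norm e \<le> r" using s by (simp add: \<sigma>_def norm_mult)
    then have "s * norm e < s * 1" using s by linarith
    then show ?thesis using s by simp
  qed
  obtain K where K: "\<And>k w. norm (((*v) (\<chi> i j. C $ i $ j / \<sigma>) ^^ k) w) \<le> K * norm w"
    using bounded_powers[OF disc'] by blast
  show thesis
  proof (rule that[OF s(1,2)])
    fix k w
    have "norm (((*v) C ^^ k) w) = s ^ k * norm (((*v) (\<chi> i j. C $ i $ j / \<sigma>) ^^ k) w)"
      using s by (simp add: divide_matrix_iterate[OF \<sigma>, where C=C and k=k and w=w] \<sigma>_def norm_of_real_smult
          flip: of_real_power)
    also have "\<dots> \<le> s ^ k * (K * norm w)"
      using K s by (simp add: mult_left_mono)
    finally show "norm (((*v) C ^^ k) w) \<le> K * s ^ k * norm w" by (simp add: ac_simps)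
  qed
qed

lemma expansive_inverse_contracts:
  fixes R :: "real^'d^'d"
  assumes "expansive R" and "0 < \<epsilon>"
  obtains k where "\<And>x. norm (((*v) (matrix_inv R) ^^ k) x) \<le> \<epsilon> * norm x"
proof -
  have disc: "norm c < 1" if "cart_eigenvalue (complexify (matrix_inv R)) c" for c
    using expansive_inverse_eigenvalues[OF assms(1) that] .
  obtain K s where s: "0 < s" "s < 1"
    and K: "\<And>k w. norm (((*v) (complexify (matrix_inv R)) ^^ k) w) \<le> K * s ^ k * norm w"
    using decaying_powers[OF disc] by metis
  obtain k where k: "s ^ k < \<epsilon> / (\<bar>K\<bar> + 1)"
    using real_arch_pow_inv[of "\<epsilon> / (\<bar>K\<bar> + 1)" s] assms(2) s by auto
  have "norm (((*v) (matrix_inv R) ^^ k) x) \<le> \<epsilon> * norm x" for x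
  proof -
    have "norm (((*v) (matrix_inv R) ^^ k) x) \<le> K * s ^ k * norm x"
      using K[of k "cvec x"] by (simp add: cvec_iterate[symmetric] norm_cvec)
    also have "\<dots> \<le> (\<bar>K\<bar> + 1) * s ^ k * norm x"
      using s by (intro mult_right_mono) auto
    also have "\<dots> \<le> \<epsilon> * norm x"
      using k s by (intro mult_right_mono) (auto simp: pos_less_divide_eq mult.commute less_imp_le)
    finally show ?thesis .
  qed
  then show thesis by (rule that)
qed

lemma measure_far_tendsto_0:
  fixes \<mu> :: "(real^'d) measure"
  assumes "prob_space \<mu>" and "sets \<mu> = sets borel"
  shows "(\<lambda>m. measure \<mu> {x. real m \<le> norm (x - y0)}) \<longlonglongrightarrow> 0"
proof -
  interpret prob_space \<mu> by fact
  define G where "G m = {x. real m \<le> norm (x - y0)}" for m :: nat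
  have "\<Inter> (range G) = {}"
  proof -
    have "x \<notin> \<Inter> (range G)" for x
      using reals_Archimedean2[of "norm (x - y0)"] by (auto simp: G_def not_le)
    then show ?thesis by blast
  qed
  moreover have "(\<lambda>m. measure \<mu> (G m)) \<longlonglongrightarrow> measure \<mu> (\<Inter> (range G))"
    by (rule finite_Lim_measure_decseq) (auto simp: G_def monotone_on_def assms(2))
  ultimately show ?thesis by (simp add: G_def)
qed

lemma indicator_L2:
  fixes \<mu> :: "(real^'d) measure"
  assumes "finite_measure \<mu>" and S: "S \<in> sets \<mu>"
  shows "(indicator S :: real^'d \<Rightarrow> complex) \<in> L2 \<mu>"
    and "L2_norm_sq \<mu> (indicator S :: real^'d \<Rightarrow> complex) = measure \<mu> S"
proof -
  interpret finite_measure \<mu> by fact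
  have sq: "(\<lambda>x. (norm (indicator S x :: complex))\<^sup>2) = indicator S"
    by (auto simp: indicator_def)
  show "(indicator S :: real^'d \<Rightarrow> complex) \<in> L2 \<mu>"
    unfolding L2_def using S by (simp add: sq integrable_indicator_iff emeasure_eq_measure)
  show "L2_norm_sq \<mu> (indicator S :: real^'d \<Rightarrow> complex) = measure \<mu> S"
    unfolding L2_norm_sq_def using S by (simp add: sq)
qed

lemma continuous_fourier_image:
  fixes \<mu> :: "'a measure" and g :: "'a \<Rightarrow> real^'d"
  assumes "finite_measure \<mu>" and g: "g \<in> borel_measurable \<mu>"
  shows "continuous_on UNIV (\<lambda>t. \<integral>y. cis (- 2 * pi * (t \<bullet> g y)) \<partial>\<mu>)"
proof -
  interpret finite_measure \<mu> by fact
  have cm: "(\<lambda>y. cis (- (2 * pi * (t \<bullet> g y)))) \<in> borel_measurable \<mu>" for t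
  proof -
    have "(\<lambda>x::real^'d. cis (- (2 * pi * (t \<bullet> x)))) \<in> borel_measurable borel"
      by (intro borel_measurable_continuous_onI continuous_intros)
    from measurable_compose[OF g this] show ?thesis .
  qed
  have "isCont (\<lambda>t. \<integral>y. cis (- 2 * pi * (t \<bullet> g y)) \<partial>\<mu>) t" for t
    unfolding continuous_at_sequentially comp_def
  proof (intro allI impI)
    fix Y assume Y: "Y \<longlonglongrightarrow> t"
    show "(\<lambda>n. \<integral>y. cis (- 2 * pi * (Y n \<bullet> g y)) \<partial>\<mu>) \<longlonglongrightarrow> (\<integral>y. cis (- 2 * pi * (t \<bullet> g y)) \<partial>\<mu>)"
      by (rule integral_dominated_convergence[where w="\<lambda>_. 1"])
         (use cm in \<open>auto intro!: tendsto_intros Y\<close>)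
  qed
  then show ?thesis by (auto intro: continuous_at_imp_continuous_on)
qed

lemma frame_inequality_real:
  fixes q A B :: real and I :: ennreal
  assumes q: "0 < q" and A: "0 < A"
    and lower: "ennreal (A * q) \<le> ennreal (q * q) * I"
    and upper: "ennreal (q * q) * I \<le> ennreal (B * q)"
  shows "A \<le> q * enn2real I" and "q * enn2real I \<le> B"
proof -
  have "I \<noteq> \<top>"
  proof
    assume "I = \<top>"
    then have "ennreal (q * q) * I = \<top>" using q by (simp add: ennreal_mult_eq_top_iff)
    then show False using upper by (simp add: top_unique)
  qed
  then obtain r where r: "I = ennreal r" "0 \<le> r" by (cases I) auto
  have eq: "ennreal (q * q) * I = ennreal (q * (q * r))"
    using r q by (simp add: ennreal_mult[symmetric] mult.assoc)
  have "A * q \<le> q * (q * r)" using lower q r unfolding eq by simp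
  then show "A \<le> q * enn2real I" using q r by (simp add: mult.commute[of A])
  then have "0 < q * (q * r)" using A q r by simp
  then have "q * (q * r) \<le> B * q" using upper unfolding eq by (simp add: ennreal_le_iff2)
  then show "q * enn2real I \<le> B" using q r by (simp add: mult.commute[of B])
qed

text \<open>If both \<open>q^k r_k \<le> B\<close> and \<open>A \<le> q'^k r_k\<close> for all \<open>k\<close> (with \<open>A > 0\<close>), then
  \<open>(q/q')^k \<le> B/A\<close> for all \<open>k\<close>, which forces \<open>q \<le> q'\<close>.\<close>
lemma bounded_ratio_powers:
  fixes q q' A B :: real
  assumes A: "0 < A" and q: "0 < q" and q': "0 < q'"
    and bounds: "\<And>k. \<exists>r. q ^ k * r \<le> B \<and> A \<le> q' ^ k * r"
  shows "q \<le> q'"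
proof (rule ccontr)
  assume "\<not> q \<le> q'"
  then have gt: "1 < q / q'" using q' by simp
  obtain k where k: "B / A < (q / q') ^ k" using real_arch_pow[OF gt] by blast
  obtain r where r: "q ^ k * r \<le> B" "A \<le> q' ^ k * r" using bounds by blast
  have "(q / q') ^ k * A \<le> (q / q') ^ k * (q' ^ k * r)"
    using r(2) q q' by (intro mult_left_mono) auto
  also have "\<dots> = q ^ k * r" using q' by (simp add: power_divide)
  also have "\<dots> \<le> B" by (rule r(1))
  finally have "(q / q') ^ k \<le> B / A" using A by (simp add: pos_le_divide_eq)
  then show False using k by simp
qed

primrec ifs_word :: "real^'d^'d \<Rightarrow> (real^'d) list \<Rightarrow> real^'d \<Rightarrow> real^'d" where
  "ifs_word R [] = id"
| "ifs_word R (b # w) = ifs_map R b \<circ> ifs_word R w"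

definition word_weight :: "(real^'d \<Rightarrow> real) \<Rightarrow> (real^'d) list \<Rightarrow> real" where
  "word_weight p w = prod_list (map p w)"

locale affine_ifs =
  fixes R :: "real^'d^'d" and \<B> :: "(real^'d) set" and p :: "real^'d \<Rightarrow> real"
    and X :: "(real^'d) set" and \<mu> :: "(real^'d) measure"
  assumes expR: "expansive R"
    and finB: "finite \<B>"
    and ppos: "\<forall>b\<in>\<B>. 0 < p b"
    and psum: "(\<Sum>b\<in>\<B>. p b) = 1"
    and Xcpt: "compact X" and Xne: "X \<noteq> {}"
    and Xattr: "X = (\<Union>b\<in>\<B>. ifs_map R b ` X)"
    and mu_prob: "prob_space \<mu>" and mu_sets: "sets \<mu> = sets borel"
    and mu_inv: "\<forall>E \<in> sets borel. measure \<mu> E = (\<Sum>b\<in>\<B>. p b * measure \<mu> (ifs_map R b -` E))"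
    and no_overlap: "\<forall>b\<in>\<B>. \<forall>b'\<in>\<B>. b \<noteq> b' \<longrightarrow>
                        measure \<mu> (ifs_map R b ` X \<inter> ifs_map R b' ` X) = 0"
begin

sublocale prob_space \<mu> by (rule mu_prob)

abbreviation \<tau> :: "real^'d \<Rightarrow> real^'d \<Rightarrow> real^'d" where
  "\<tau> b \<equiv> ifs_map R b"

abbreviation lin :: "nat \<Rightarrow> real^'d \<Rightarrow> real^'d" where
  "lin k \<equiv> (*v) (matrix_inv R) ^^ k"

lemma infdist_superlevel_borel: "{x. e \<le> infdist x X} \<in> sets borel"
proof -
  have "(\<lambda>x. infdist x X) \<in> borel_measurable borel"
    by (intro borel_measurable_continuous_onI continuous_on_infdist continuous_on_id)
  then show ?thesis by measurable
qed

lemma space_mu [simp]: "space \<mu> = UNIV"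
  using sets_eq_imp_space_eq[OF mu_sets] by simp

lemma borel_measurable_mu: "f \<in> borel_measurable borel \<Longrightarrow> f \<in> borel_measurable \<mu>"
  using measurable_cong_sets[OF mu_sets refl] by blast

lemma tau_affine: "\<tau> b x = matrix_inv R *v x + matrix_inv R *v b"
  by (simp add: ifs_map_def matrix_vector_right_distrib)

lemma tau_inj: "inj (\<tau> b)"
proof (rule injI)
  fix x y assume "\<tau> b x = \<tau> b y"
  then have "R *v (matrix_inv R *v (x + b)) = R *v (matrix_inv R *v (y + b))"
    by (simp add: ifs_map_def)
  then show "x = y" by (simp add: matrix_vector_mul_assoc expansive_inverse[OF expR])
qed

lemma linear_lin: "linear (lin k)"
proof (induction k)
  case 0
  then show ?case by (simp add: linear_iff)
next
  case (Suc k)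
  then show ?case by (metis funpow.simps(2) linear_compose matrix_vector_mul_linear)
qed

lemma word_affine: "\<exists>c. \<forall>x. ifs_word R w x = lin (length w) x + c"
proof (induction w)
  case Nil
  show ?case by (rule exI[of _ 0]) simp
next
  case (Cons b w)
  then obtain c where c: "\<forall>x. ifs_word R w x = lin (length w) x + c" by blast
  have "ifs_word R (b # w) x = lin (length (b # w)) x + (matrix_inv R *v c + matrix_inv R *v b)" for x
    using c by (simp add: tau_affine matrix_vector_right_distrib)
  then show ?case by blast
qed

lemma word_continuous: "continuous_on A (ifs_word R w)"
proof -
  obtain c where c: "\<forall>x. ifs_word R w x = lin (length w) x + c" using word_affine by blast
  have "continuous_on A (\<lambda>x. lin (length w) x + c)"
    using linear_lin by (intro continuous_intros linear_continuous_on linear_conv_bounded_linear[THEN iffD1])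
  then show ?thesis using c by simp
qed

lemma word_measurable: "ifs_word R w \<in> borel_measurable borel"
  by (rule borel_measurable_continuous_onI[OF word_continuous])

lemma tau_measurable: "\<tau> b \<in> borel_measurable borel"
  using word_measurable[of "[b]"] by simp

lemma word_image_borel: "ifs_word R w ` X \<in> sets borel"
  using compact_continuous_image[OF word_continuous Xcpt] by (simp add: compact_imp_closed borel_closed)

lemma word_image_subset: "set w \<subseteq> \<B> \<Longrightarrow> ifs_word R w ` X \<subseteq> X"
proof (induction w)
  case (Cons b w)
  have "ifs_word R (b # w) ` X = \<tau> b ` (ifs_word R w ` X)" by (simp add: image_comp)
  also have "\<dots> \<subseteq> \<tau> b ` X" using Cons by (intro image_mono) auto
  also have "\<dots> \<subseteq> X" using Cons.prems Xattr by auto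
  finally show ?case .
qed simp

lemma word_weight_pos: "set w \<subseteq> \<B> \<Longrightarrow> 0 < word_weight p w"
  using ppos by (induction w) (auto simp: word_weight_def)

lemma word_weight_replicate: "word_weight p (replicate k b) = p b ^ k"
  by (simp add: word_weight_def)

text \<open>Since \<open>\<mu> E\<close> is a convex combination of the \<open>\<mu>(\<tau>\<^sub>b\<inverse> E)\<close>, one of them is at least \<open>\<mu> E\<close>;
  iterating, some word of every length \<open>k\<close> pulls \<open>E\<close> back to a set of no smaller measure.\<close>
lemma heavier_pullback:
  assumes E: "E \<in> sets borel"
  shows "\<exists>b\<in>\<B>. measure \<mu> E \<le> measure \<mu> (\<tau> b -` E)"
proof (rule ccontr)
  assume "\<not> ?thesis"
  then have lt: "\<forall>b\<in>\<B>. measure \<mu> (\<tau> b -` E) < measure \<mu> E" by auto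
  have "\<B> \<noteq> {}" using psum by auto
  then have "(\<Sum>b\<in>\<B>. p b * measure \<mu> (\<tau> b -` E)) < (\<Sum>b\<in>\<B>. p b * measure \<mu> E)"
    using lt ppos by (intro sum_strict_mono[OF finB] mult_strict_left_mono) auto
  also have "\<dots> = measure \<mu> E" using psum by (simp add: sum_distrib_right[symmetric])
  finally show False using mu_inv E by simp
qed

lemma heavier_word_pullback:
  assumes E: "E \<in> sets borel"
  shows "\<exists>w. set w \<subseteq> \<B> \<and> length w = k \<and> measure \<mu> E \<le> measure \<mu> (ifs_word R w -` E)"
  using E
proof (induction k arbitrary: E)
  case 0
  show ?case by (rule exI[of _ "[]"]) simp
next
  case (Suc k)
  obtain b where b: "b \<in> \<B>" "measure \<mu> E \<le> measure \<mu> (\<tau> b -` E)"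
    using heavier_pullback[OF Suc.prems] by blast
  obtain w where w: "set w \<subseteq> \<B>" "length w = k"
    "measure \<mu> (\<tau> b -` E) \<le> measure \<mu> (ifs_word R w -` (\<tau> b -` E))"
    using Suc.IH[OF measurable_sets_borel[OF tau_measurable Suc.prems]] by blast
  have "measure \<mu> E \<le> measure \<mu> (ifs_word R (b # w) -` E)"
    using b(2) w(3) unfolding ifs_word.simps vimage_comp[symmetric] by linarith
  then show ?case using b(1) w(1,2) by (intro exI[of _ "b # w"]) (simp add: comp_def)
qed

text \<open>The measure is carried by the attractor: points at distance \<open>\<ge> \<epsilon>\<close> from \<open>X\<close> are pulled
  back by a long word (whose linear part contracts by a large factor) to points very far away.\<close>
lemma far_from_attractor_null:
  assumes eps: "0 < \<epsilon>"
  shows "measure \<mu> {x. \<epsilon> \<le> infdist x X} = 0"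
proof (rule ccontr)
  define D where "D = {x. \<epsilon> \<le> infdist x X}"
  assume "measure \<mu> {x. \<epsilon> \<le> infdist x X} \<noteq> 0"
  then have D_pos: "0 < measure \<mu> D" using measure_nonneg[of \<mu> D] unfolding D_def by linarith
  have D_borel: "D \<in> sets borel" unfolding D_def by (rule infdist_superlevel_borel)
  obtain y0 where y0: "y0 \<in> X" using Xne by blast
  obtain m :: nat where m: "measure \<mu> {x. real m \<le> norm (x - y0)} < measure \<mu> D"
    using measure_far_tendsto_0[OF mu_prob mu_sets, of y0] D_pos
    by (metis (no_types, lifting) LIMSEQ_le_const linorder_not_le order_refl)
  obtain k where k: "\<And>x. norm (lin k x) \<le> \<epsilon> / (real m + 1) * norm x"
    using expansive_inverse_contracts[OF expR, of "\<epsilon> / (real m + 1)"] eps by auto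
  obtain w where w: "set w \<subseteq> \<B>" "length w = k" "measure \<mu> D \<le> measure \<mu> (ifs_word R w -` D)"
    using heavier_word_pullback[OF D_borel] by blast
  obtain c where c: "\<forall>x. ifs_word R w x = lin k x + c" using word_affine w(2) by blast
  have "ifs_word R w -` D \<subseteq> {x. real m \<le> norm (x - y0)}"
  proof
    fix x assume "x \<in> ifs_word R w -` D"
    then have "\<epsilon> \<le> infdist (ifs_word R w x) X" by (simp add: D_def)
    also have "\<dots> \<le> dist (ifs_word R w x) (ifs_word R w y0)"
      using word_image_subset[OF w(1)] y0 by (intro infdist_le) auto
    also have "\<dots> = norm (lin k (x - y0))"
      using c by (simp add: dist_norm linear_diff[OF linear_lin])
    also have "\<dots> \<le> \<epsilon> / (real m + 1) * norm (x - y0)" by (rule k)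
    finally have "\<epsilon> * (real m + 1) \<le> \<epsilon> * norm (x - y0)" by (simp add: field_simps)
    then show "x \<in> {x. real m \<le> norm (x - y0)}" using eps by simp
  qed
  then have "measure \<mu> (ifs_word R w -` D) \<le> measure \<mu> {x. real m \<le> norm (x - y0)}"
    by (intro finite_measure_mono) (auto simp: mu_sets)
  then show False using w(3) m by linarith
qed

text \<open>So \<open>\<mu>\<close> is carried by \<open>X\<close>: the complement of \<open>X\<close> is a countable union of such sets.\<close>
lemma attractor_full: "measure \<mu> (UNIV - X) = 0"
proof -
  define D where "D j = {x. 1 / real (Suc j) \<le> infdist x X}" for j
  have "D j \<in> null_sets \<mu>" for j
  proof -
    have "D j \<in> sets \<mu>" unfolding D_def mu_sets by (rule infdist_superlevel_borel)
    moreover have "measure \<mu> (D j) = 0" unfolding D_def by (rule far_from_attractor_null) simp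
    ultimately show ?thesis by (simp add: null_setsI emeasure_eq_measure)
  qed
  moreover have "UNIV - X \<subseteq> (\<Union>j. D j)"
  proof
    fix x assume "x \<in> UNIV - X"
    then have "0 < infdist x X"
      using infdist_pos_not_in_closed[of X x] Xcpt Xne compact_imp_closed by auto
    then obtain j where "1 / real (Suc j) < infdist x X"
      using reals_Archimedean by (auto simp: inverse_eq_divide)
    then show "x \<in> (\<Union>j. D j)" by (auto simp: D_def intro!: less_imp_le)
  qed
  moreover have "UNIV - X \<in> sets \<mu>"
    using Xcpt by (simp add: mu_sets compact_imp_closed borel_closed)
  ultimately have "UNIV - X \<in> null_sets \<mu>" by (metis null_sets_UN null_sets_subset)
  then show ?thesis by (simp add: measure_eq_0_null_sets)
qed

lemma measure_Int_attractor:
  assumes A: "A \<in> sets borel"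
  shows "measure \<mu> (A \<inter> X) = measure \<mu> A"
proof -
  have X: "X \<in> sets borel" using Xcpt by (simp add: compact_imp_closed borel_closed)
  have "measure \<mu> (A - (A \<inter> X)) = measure \<mu> A - measure \<mu> (A \<inter> X)"
    using A X by (intro finite_measure_Diff) (auto simp: mu_sets)
  moreover have "measure \<mu> (A - (A \<inter> X)) \<le> measure \<mu> (UNIV - X)"
    using X by (intro finite_measure_mono) (auto simp: mu_sets)
  moreover have "measure \<mu> (A \<inter> X) \<le> measure \<mu> A"
    using A by (intro finite_measure_mono) (auto simp: mu_sets)
  ultimately show ?thesis using attractor_full measure_nonneg[of \<mu> "A - (A \<inter> X)"] by linarith
qed

text \<open>No overlap forces \<open>\<tau>\<^sub>c\<inverse>(\<tau>\<^sub>b X \<inter> \<tau>\<^sub>c X)\<close> to be null: its weighted measure is one of the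
  nonnegative terms summing to the measure of the null overlap.\<close>
lemma overlap_pullback_null:
  assumes b: "b \<in> \<B>" and c: "c \<in> \<B>" and bc: "b \<noteq> c"
  shows "measure \<mu> (\<tau> c -` (\<tau> b ` X \<inter> \<tau> c ` X)) = 0"
proof -
  let ?O = "\<tau> b ` X \<inter> \<tau> c ` X"
  have "?O \<in> sets borel"
    using word_image_borel[of "[b]"] word_image_borel[of "[c]"] by auto
  with mu_inv have "measure \<mu> ?O = (\<Sum>c'\<in>\<B>. p c' * measure \<mu> (\<tau> c' -` ?O))" by blast
  moreover have "measure \<mu> ?O = 0" using no_overlap b c bc by blast
  ultimately have "(\<Sum>c'\<in>\<B>. p c' * measure \<mu> (\<tau> c' -` ?O)) = 0" by linarith
  moreover have "\<forall>c'\<in>\<B>. 0 \<le> p c' * measure \<mu> (\<tau> c' -` ?O)"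
    using ppos by (simp add: less_imp_le)
  ultimately have "\<forall>c'\<in>\<B>. p c' * measure \<mu> (\<tau> c' -` ?O) = 0"
    using sum_nonneg_eq_0_iff[OF finB, of "\<lambda>c'. p c' * measure \<mu> (\<tau> c' -` ?O)"] by simp
  then have "p c * measure \<mu> (\<tau> c -` ?O) = 0" using c by blast
  moreover have "0 < p c" using ppos c by blast
  ultimately show ?thesis by auto
qed

lemma measure_piece:
  assumes b: "b \<in> \<B>" and E: "E \<in> sets borel"
  shows "measure \<mu> (E \<inter> \<tau> b ` X) = p b * measure \<mu> (\<tau> b -` E)"
proof -
  have piece: "\<tau> c ` X \<in> sets borel" for c using word_image_borel[of "[c]"] by simp
  have EI: "E \<inter> \<tau> b ` X \<in> sets borel" using E piece by blast
  have summand: "p c * measure \<mu> (\<tau> c -` (E \<inter> \<tau> b ` X)) =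
      (if c = b then p b * measure \<mu> (\<tau> b -` E) else 0)" if c: "c \<in> \<B>" for c
  proof (cases "c = b")
    case True
    have "\<tau> b -` (E \<inter> \<tau> b ` X) = \<tau> b -` E \<inter> X"
      by (simp add: vimage_Int inj_vimage_image_eq[OF tau_inj])
    then show ?thesis
      using True measure_Int_attractor[OF measurable_sets_borel[OF tau_measurable E]] by simp
  next
    case False
    have "measure \<mu> (\<tau> c -` (E \<inter> \<tau> b ` X)) = measure \<mu> (\<tau> c -` (E \<inter> \<tau> b ` X) \<inter> X)"
      using measure_Int_attractor[OF measurable_sets_borel[OF tau_measurable EI]] by simp
    also have "\<dots> \<le> measure \<mu> (\<tau> c -` (\<tau> b ` X \<inter> \<tau> c ` X))"
      using measurable_sets_borel[OF tau_measurable, of "\<tau> b ` X \<inter> \<tau> c ` X" c] piece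
      by (intro finite_measure_mono) (auto simp: mu_sets)
    also have "\<dots> = 0" using overlap_pullback_null[OF b c] False by simp
    finally have "measure \<mu> (\<tau> c -` (E \<inter> \<tau> b ` X)) = 0"
      using measure_nonneg[of \<mu> "\<tau> c -` (E \<inter> \<tau> b ` X)"] by linarith
    then show ?thesis using False by simp
  qed
  have "measure \<mu> (E \<inter> \<tau> b ` X) = (\<Sum>c\<in>\<B>. p c * measure \<mu> (\<tau> c -` (E \<inter> \<tau> b ` X)))"
    using mu_inv EI by blast
  also have "\<dots> = (\<Sum>c\<in>\<B>. if c = b then p b * measure \<mu> (\<tau> b -` E) else 0)"
    using summand by (rule sum.cong[OF refl])
  also have "\<dots> = p b * measure \<mu> (\<tau> b -` E)" using b finB by simp
  finally show ?thesis .
qed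

lemma measure_cylinder:
  assumes "set w \<subseteq> \<B>" and "E \<in> sets borel"
  shows "measure \<mu> (E \<inter> ifs_word R w ` X) = word_weight p w * measure \<mu> (ifs_word R w -` E)"
  using assms
proof (induction w arbitrary: E)
  case Nil
  then show ?case using measure_Int_attractor by (simp add: word_weight_def)
next
  case (Cons b w)
  let ?Y = "ifs_word R w ` X"
  have b: "b \<in> \<B>" and w: "set w \<subseteq> \<B>" using Cons.prems by auto
  have "E \<inter> \<tau> b ` ?Y \<in> sets borel"
    using Cons.prems(2) word_image_borel[of "b # w"] by (auto simp: image_comp)
  moreover have "E \<inter> ifs_word R (b # w) ` X = (E \<inter> \<tau> b ` ?Y) \<inter> \<tau> b ` X"
    using word_image_subset[OF w] by (auto simp: image_comp)
  ultimately have "measure \<mu> (E \<inter> ifs_word R (b # w) ` X) =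
      p b * measure \<mu> (\<tau> b -` (E \<inter> \<tau> b ` ?Y))"
    using measure_piece[OF b] by metis
  also have "\<tau> b -` (E \<inter> \<tau> b ` ?Y) = \<tau> b -` E \<inter> ?Y"
    by (simp add: vimage_Int inj_vimage_image_eq[OF tau_inj])
  also have "measure \<mu> (\<tau> b -` E \<inter> ?Y) = word_weight p w * measure \<mu> (ifs_word R w -` (\<tau> b -` E))"
    using Cons.IH[OF w measurable_sets_borel[OF tau_measurable Cons.prems(2)]] by (simp add: Int_commute)
  also have "ifs_word R w -` (\<tau> b -` E) = ifs_word R (b # w) -` E" by auto
  finally show ?case by (simp add: word_weight_def comp_def)
qed

lemma cylinder_density:
  assumes w: "set w \<subseteq> \<B>"
  shows "density \<mu> (\<lambda>x. ennreal (indicator (ifs_word R w ` X) x)) =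
         density (distr \<mu> borel (ifs_word R w)) (\<lambda>_. ennreal (word_weight p w))"
proof (rule measure_eqI)
  show "sets (density \<mu> (\<lambda>x. ennreal (indicator (ifs_word R w ` X) x))) =
        sets (density (distr \<mu> borel (ifs_word R w)) (\<lambda>_. ennreal (word_weight p w)))"
    by (simp add: mu_sets)
  fix A assume "A \<in> sets (density \<mu> (\<lambda>x. ennreal (indicator (ifs_word R w ` X) x)))"
  then have A: "A \<in> sets borel" by (simp add: mu_sets)
  have Wm: "ifs_word R w \<in> \<mu> \<rightarrow>\<^sub>M borel" by (rule borel_measurable_mu[OF word_measurable])
  have "emeasure (density \<mu> (\<lambda>x. ennreal (indicator (ifs_word R w ` X) x))) A =
      emeasure \<mu> (ifs_word R w ` X \<inter> A)"
    unfolding ennreal_indicator using word_image_borel A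
    by (intro emeasure_restricted) (auto simp: mu_sets)
  also have "\<dots> = ennreal (word_weight p w * measure \<mu> (ifs_word R w -` A))"
    using measure_cylinder[OF w A] by (simp add: emeasure_eq_measure Int_commute)
  also have "\<dots> = ennreal (word_weight p w) * emeasure (distr \<mu> borel (ifs_word R w)) A"
    using word_weight_pos[OF w] by (simp add: emeasure_distr[OF Wm A] emeasure_eq_measure ennreal_mult)
  also have "\<dots> = emeasure (density (distr \<mu> borel (ifs_word R w)) (\<lambda>_. ennreal (word_weight p w))) A"
    using A by (simp add: emeasure_density_const)
  finally show "emeasure (density \<mu> (\<lambda>x. ennreal (indicator (ifs_word R w ` X) x))) A =
      emeasure (density (distr \<mu> borel (ifs_word R w)) (\<lambda>_. ennreal (word_weight p w))) A" .
qed

lemma integral_cylinder: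
  fixes \<phi> :: "real^'d \<Rightarrow> complex"
  assumes w: "set w \<subseteq> \<B>" and \<phi>: "\<phi> \<in> borel_measurable borel"
  shows "(\<integral>x. indicator (ifs_word R w ` X) x *\<^sub>R \<phi> x \<partial>\<mu>) =
         word_weight p w *\<^sub>R (\<integral>y. \<phi> (ifs_word R w y) \<partial>\<mu>)"
proof -
  have ind: "indicator (ifs_word R w ` X) \<in> borel_measurable \<mu>"
    by (rule borel_measurable_indicator) (simp add: mu_sets word_image_borel)
  have "(\<integral>x. indicator (ifs_word R w ` X) x *\<^sub>R \<phi> x \<partial>\<mu>) =
        integral\<^sup>L (density \<mu> (\<lambda>x. ennreal (indicator (ifs_word R w ` X) x))) \<phi>"
    by (rule integral_density[symmetric]) (use ind borel_measurable_mu[OF \<phi>] in auto)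
  also have "\<dots> = integral\<^sup>L (density (distr \<mu> borel (ifs_word R w)) (\<lambda>_. ennreal (word_weight p w))) \<phi>"
    by (simp only: cylinder_density[OF w])
  also have "\<dots> = (\<integral>x. word_weight p w *\<^sub>R \<phi> x \<partial>distr \<mu> borel (ifs_word R w))"
    using \<phi> word_weight_pos[OF w] by (intro integral_density) auto
  also have "\<dots> = (\<integral>y. word_weight p w *\<^sub>R \<phi> (ifs_word R w y) \<partial>\<mu>)"
    using \<phi> by (intro integral_distr borel_measurable_mu[OF word_measurable]) simp
  finally show ?thesis by simp
qed

definition fourier_lin :: "nat \<Rightarrow> real^'d \<Rightarrow> complex" where
  "fourier_lin k t = (\<integral>y. cis (- 2 * pi * (t \<bullet> lin k y)) \<partial>\<mu>)"

lemma fourier_lin_measurable: "fourier_lin k \<in> borel_measurable borel"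
proof -
  have "lin k \<in> borel_measurable \<mu>"
    using linear_lin by (intro borel_measurable_mu borel_measurable_continuous_onI linear_continuous_on
        linear_conv_bounded_linear[THEN iffD1])
  from continuous_fourier_image[OF finite_measure_axioms this]
  show ?thesis unfolding fourier_lin_def[abs_def] by (rule borel_measurable_continuous_onI)
qed

text \<open>Up to a unimodular factor (the translation part), the Fourier transform of the
  indicator of a cylinder is \<open>p\<^sub>w\<close> times \<open>fourier_lin\<close>.\<close>
lemma fourier_cylinder:
  assumes w: "set w \<subseteq> \<B>"
  shows "norm (fourier_fmu \<mu> (indicator (ifs_word R w ` X)) t) =
         word_weight p w * norm (fourier_lin (length w) t)"
proof -
  obtain c where c: "\<forall>x. ifs_word R w x = lin (length w) x + c" using word_affine by blast
  have "fourier_fmu \<mu> (indicator (ifs_word R w ` X)) t =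
        (\<integral>x. indicator (ifs_word R w ` X) x *\<^sub>R cis (- 2 * pi * (t \<bullet> x)) \<partial>\<mu>)"
    unfolding fourier_fmu_def by (intro Bochner_Integration.integral_cong) (auto simp: indicator_def)
  also have "\<dots> = word_weight p w *\<^sub>R (\<integral>y. cis (- 2 * pi * (t \<bullet> ifs_word R w y)) \<partial>\<mu>)"
    by (intro integral_cylinder[OF w] borel_measurable_continuous_onI continuous_intros)
  also have "(\<integral>y. cis (- 2 * pi * (t \<bullet> ifs_word R w y)) \<partial>\<mu>) =
             (\<integral>y. cis (- 2 * pi * (t \<bullet> lin (length w) y)) * cis (- 2 * pi * (t \<bullet> c)) \<partial>\<mu>)"
    by (intro Bochner_Integration.integral_cong) (auto simp: c inner_add_right cis_mult algebra_simps)
  also have "\<dots> = fourier_lin (length w) t * cis (- 2 * pi * (t \<bullet> c))"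
    unfolding fourier_lin_def by (rule integral_mult_left_zero)
  finally show ?thesis using word_weight_pos[OF w] by (simp add: norm_mult)
qed

text \<open>Testing the frame inequality on the indicator of a cylinder: its squared norm is \<open>p\<^sub>w\<close>
  and its transform has squared modulus \<open>p\<^sub>w\<^sup>2 |fourier_lin|\<^sup>2\<close>, so \<open>A \<le> p\<^sub>w I\<^sub>k \<le> B\<close>, where
  \<open>I\<^sub>k\<close> depends only on the length \<open>k\<close> of the word.\<close>
lemma cylinder_frame_bounds:
  assumes w: "set w \<subseteq> \<B>" and \<nu>: "sets \<nu> = sets borel" and A: "0 < A"
    and frame: "\<forall>f \<in> L2 \<mu>.
          ennreal (A * L2_norm_sq \<mu> f) \<le> (\<integral>\<^sup>+ t. ennreal ((norm (fourier_fmu \<mu> f t))\<^sup>2) \<partial>\<nu>) \<and>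
          (\<integral>\<^sup>+ t. ennreal ((norm (fourier_fmu \<mu> f t))\<^sup>2) \<partial>\<nu>) \<le> ennreal (B * L2_norm_sq \<mu> f)"
  defines "I \<equiv> enn2real (\<integral>\<^sup>+ t. ennreal ((norm (fourier_lin (length w) t))\<^sup>2) \<partial>\<nu>)"
  shows "A \<le> word_weight p w * I" and "word_weight p w * I \<le> B"
proof -
  let ?q = "word_weight p w" and ?f = "indicator (ifs_word R w ` X) :: real^'d \<Rightarrow> complex"
  have cyl: "ifs_word R w ` X \<in> sets \<mu>" using word_image_borel by (simp add: mu_sets)
  have [measurable]: "fourier_lin (length w) \<in> borel_measurable \<nu>"
    using measurable_cong_sets[OF \<nu> refl] fourier_lin_measurable by blast
  have "(\<integral>\<^sup>+ t. ennreal ((norm (fourier_fmu \<mu> ?f t))\<^sup>2) \<partial>\<nu>) =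
      (\<integral>\<^sup>+ t. ennreal (?q * ?q) * ennreal ((norm (fourier_lin (length w) t))\<^sup>2) \<partial>\<nu>)"
    using word_weight_pos[OF w]
    by (intro nn_integral_cong) (simp add: fourier_cylinder[OF w] ennreal_mult[symmetric]
        power2_eq_square algebra_simps)
  also have "\<dots> = ennreal (?q * ?q) * (\<integral>\<^sup>+ t. ennreal ((norm (fourier_lin (length w) t))\<^sup>2) \<partial>\<nu>)"
    by (rule nn_integral_cmult) measurable
  finally have transform: "(\<integral>\<^sup>+ t. ennreal ((norm (fourier_fmu \<mu> ?f t))\<^sup>2) \<partial>\<nu>) =
      ennreal (?q * ?q) * (\<integral>\<^sup>+ t. ennreal ((norm (fourier_lin (length w) t))\<^sup>2) \<partial>\<nu>)" .
  have norm: "L2_norm_sq \<mu> ?f = ?q"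
    using indicator_L2(2)[OF finite_measure_axioms cyl] measure_cylinder[OF w, of UNIV] prob_space
    by simp
  have "ennreal (A * L2_norm_sq \<mu> ?f) \<le> (\<integral>\<^sup>+ t. ennreal ((norm (fourier_fmu \<mu> ?f t))\<^sup>2) \<partial>\<nu>) \<and>
      (\<integral>\<^sup>+ t. ennreal ((norm (fourier_fmu \<mu> ?f t))\<^sup>2) \<partial>\<nu>) \<le> ennreal (B * L2_norm_sq \<mu> ?f)"
    using frame indicator_L2(1)[OF finite_measure_axioms cyl] by blast
  then have "ennreal (A * ?q) \<le> ennreal (?q * ?q) * (\<integral>\<^sup>+ t. ennreal ((norm (fourier_lin (length w) t))\<^sup>2) \<partial>\<nu>)"
    and "ennreal (?q * ?q) * (\<integral>\<^sup>+ t. ennreal ((norm (fourier_lin (length w) t))\<^sup>2) \<partial>\<nu>) \<le> ennreal (B * ?q)"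
    unfolding transform norm by auto
  from frame_inequality_real[OF word_weight_pos[OF w] A this]
  show "A \<le> ?q * I" and "?q * I \<le> B" unfolding I_def by auto
qed

end

theorem theorem3p4:
  fixes R :: "real^'d^'d" and \<B> :: "(real^'d) set" and p :: "real^'d \<Rightarrow> real"
    and X :: "(real^'d) set" and \<mu> :: "(real^'d) measure"
  assumes expR: "expansive R"
    and finB: "finite \<B>"
    and ppos: "\<forall>b\<in>\<B>. 0 < p b"
    and psum: "(\<Sum>b\<in>\<B>. p b) = 1"
    and Xcpt: "compact X" and Xne: "X \<noteq> {}"
    and Xattr: "X = (\<Union>b\<in>\<B>. ifs_map R b ` X)"
    and mu_prob: "prob_space \<mu>" and mu_sets: "sets \<mu> = sets borel"
    and mu_inv: "\<forall>E \<in> sets borel. measure \<mu> E = (\<Sum>b\<in>\<B>. p b * measure \<mu> (ifs_map R b -` E))"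
    and no_overlap: "\<forall>b\<in>\<B>. \<forall>b'\<in>\<B>. b \<noteq> b' \<longrightarrow>
                        measure \<mu> (ifs_map R b ` X \<inter> ifs_map R b' ` X) = 0"
    and frame: "\<exists>\<nu>. frame_measure \<mu> \<nu>"
  shows "\<forall>b\<in>\<B>. \<forall>b'\<in>\<B>. p b = p b'"
proof -
  interpret affine_ifs R \<B> p X \<mu>
    using assms unfolding affine_ifs_def by blast
  obtain \<nu> A B where \<nu>: "sets \<nu> = sets borel" and A: "0 < A"
    and frame_ineq: "\<forall>f \<in> L2 \<mu>.
          ennreal (A * L2_norm_sq \<mu> f) \<le> (\<integral>\<^sup>+ t. ennreal ((norm (fourier_fmu \<mu> f t))\<^sup>2) \<partial>\<nu>) \<and>
          (\<integral>\<^sup>+ t. ennreal ((norm (fourier_fmu \<mu> f t))\<^sup>2) \<partial>\<nu>) \<le> ennreal (B * L2_norm_sq \<mu> f)"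
    using frame unfolding frame_measure_def by blast
  define I where "I k = enn2real (\<integral>\<^sup>+ t. ennreal ((norm (fourier_lin k t))\<^sup>2) \<partial>\<nu>)" for k
  have bounds: "A \<le> p b ^ k * I k" "p b ^ k * I k \<le> B" if "b \<in> \<B>" for b k
  proof -
    have "set (replicate k b) \<subseteq> \<B>" using that by auto
    from cylinder_frame_bounds[OF this \<nu> A frame_ineq]
    show "A \<le> p b ^ k * I k" "p b ^ k * I k \<le> B" by (simp_all add: word_weight_replicate I_def)
  qed
  have "p b \<le> p b'" if b: "b \<in> \<B>" and b': "b' \<in> \<B>" for b b'
  proof (rule bounded_ratio_powers[OF A])
    show "0 < p b" "0 < p b'" using ppos b b' by auto
    show "\<exists>r. p b ^ k * r \<le> B \<and> A \<le> p b' ^ k * r" for k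
      using bounds b b' by blast
  qed
  then show ?thesis by (meson antisym)
qed

end
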